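(* Let $0\le k\le n$. There are exactly $k(n-k)+1$ isomorphism classes of matroids of rank $k$ on $n$ elements of the form $\mathsf{U}_{0,m}\oplus\mathsf{T}_{k-\ell,n-\ell-m}\oplus\mathsf{U}_{\ell,\ell}$, and the Tutte polynomials of representatives of these classes are linearly independent in $\mathbb{Z}[x,y]$.
   Context: $\mathsf{U}_{r,m}$ is the uniform matroid of rank $r$ on $m$ elements. For $0\le k\le n$, $\mathsf{T}_{k,n}$ is the minimal matroid: the matroid on $[n]$ whose bases are the $k$-subsets $B$ with $|B\cap\{1,\dots,k\}|\ge k-1$ (equivalently, the cycle matroid of a cycle of length $k+1$ with one edge replaced by $n-k$ parallel edges). *)

theory Defs
  imports "HOL-Computational_Algebra.Polynomial"
begin

type_synonym 'a matroid = "'a set \<times> 'a set set"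

definition ground :: "'a matroid \<Rightarrow> 'a set" where "ground M = fst M"
definition bases :: "'a matroid \<Rightarrow> 'a set set" where "bases M = snd M"

definition is_matroid :: "'a matroid \<Rightarrow> bool" where
  "is_matroid M \<longleftrightarrow> finite (ground M) \<and> bases M \<noteq> {} \<and> (\<forall>B\<in>bases M. B \<subseteq> ground M) \<and>
     (\<forall>B1\<in>bases M. \<forall>B2\<in>bases M. \<forall>x\<in>B1 - B2. \<exists>y\<in>B2 - B1. insert y (B1 - {x}) \<in> bases M)"

definition unif :: "nat \<Rightarrow> nat \<Rightarrow> nat matroid" where
  "unif r m = ({0..<m}, {B. B \<subseteq> {0..<m} \<and> card B = r})"

text \<open>Minimal matroid T_{k,n} on {0..<n} (the paper's [n] shifted by one):
  bases are the k-subsets B with |B \<inter> {0..<k}| \<ge> k-1.\<close>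
definition minmat :: "nat \<Rightarrow> nat \<Rightarrow> nat matroid" where
  "minmat k n = ({0..<n}, {B. B \<subseteq> {0..<n} \<and> card B = k \<and> card (B \<inter> {0..<k}) + 1 \<ge> k})"

definition shift :: "nat \<Rightarrow> nat matroid \<Rightarrow> nat matroid" where
  "shift d M = ((+) d ` ground M, (\<lambda>B. (+) d ` B) ` bases M)"

text \<open>Direct sum (intended for disjoint ground sets).\<close>
definition dsum :: "'a matroid \<Rightarrow> 'a matroid \<Rightarrow> 'a matroid" where
  "dsum M N = (ground M \<union> ground N, {B \<union> C | B C. B \<in> bases M \<and> C \<in> bases N})"

definition iso :: "'a matroid \<Rightarrow> 'b matroid \<Rightarrow> bool" where
  "iso M N \<longleftrightarrow> (\<exists>f. bij_betw f (ground M) (ground N) \<and> bases N = (\<lambda>B. f ` B) ` bases M)"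

definition mrank :: "'a matroid \<Rightarrow> 'a set \<Rightarrow> nat" where
  "mrank M A = Max ((\<lambda>B. card (A \<inter> B)) ` bases M)"

text \<open>Z[x,y] is represented as int poly poly: outer variable y, inner variable x.\<close>
definition varX :: "int poly poly" where "varX = [:[:0, 1:]:]"
definition varY :: "int poly poly" where "varY = [:0, 1:]"

definition tutte :: "'a matroid \<Rightarrow> int poly poly" where
  "tutte M = (\<Sum>A\<in>Pow (ground M).
      (varX - 1) ^ (mrank M (ground M) - mrank M A) * (varY - 1) ^ (card A - mrank M A))"

text \<open>U_{0,m} \<oplus> T_{k-l,n-l-m} \<oplus> U_{l,l}, realised on {0..<n}.\<close>
definition special :: "nat \<Rightarrow> nat \<Rightarrow> nat \<Rightarrow> nat \<Rightarrow> nat matroid" where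
  "special k n l m = dsum (unif 0 m)
      (dsum (shift m (minmat (k - l) (n - l - m))) (shift (n - l) (unif l l)))"

definition special_family :: "nat \<Rightarrow> nat \<Rightarrow> nat matroid set" where
  "special_family k n = {special k n l m | l m. l \<le> k \<and> m \<le> n - k}"

end

theory Submission
  imports Defs
begin

text \<open>
  The Tutte polynomial is multiplicative on direct sums, so with \<open>e = n - k\<close>,
  \<open>(x - 1)(y - 1) T(U\<^sub>0\<^sub>,\<^sub>m \<oplus> T\<^sub>k\<^sub>-\<^sub>l\<^sub>,\<^sub>n\<^sub>-\<^sub>l\<^sub>-\<^sub>m \<oplus> U\<^sub>l\<^sub>,\<^sub>l)
    = x\<^sup>l y\<^sup>m ((x - 1)(y - 1)(x\<^sup>k\<^sup>-\<^sup>l + y\<^sup>e\<^sup>-\<^sup>m - 1) + (x\<^sup>k\<^sup>-\<^sup>l - 1)(y\<^sup>e\<^sup>-\<^sup>m - 1))\<close>.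
  For \<open>l = k\<close> or \<open>m = e\<close> the matroid is always \<open>U\<^sub>0\<^sub>,\<^sub>e \<oplus> U\<^sub>k\<^sub>,\<^sub>k\<close>, so the family is indexed
  by the \<open>k e\<close> pairs with \<open>l < k\<close>, \<open>m < e\<close> and one degenerate pair.
  For \<open>m < e\<close> the lowest power of \<open>y\<close> in the polynomial above is \<open>y\<^sup>m\<close>, with coefficient
  \<open>x\<^sup>l\<^sup>+\<^sup>1 - x\<^sup>k\<^sup>+\<^sup>1\<close>, so the coefficients of the monomials \<open>y\<^sup>m x\<^sup>l\<^sup>+\<^sup>1\<close> form a triangular system:
  the Tutte polynomials are linearly independent, in particular pairwise distinct.
  As the Tutte polynomial is an isomorphism invariant, distinct members of the family are
  non-isomorphic, which gives the count \<open>k e + 1\<close>.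
\<close>

section \<open>Sums over power sets\<close>

lemma sum_Pow_binomial:
  fixes u v :: "'b::comm_semiring_1"
  assumes "finite U"
  shows "(\<Sum>A\<in>Pow U. u ^ card A * v ^ (card U - card A)) = (u + v) ^ card U"
proof -
  have "(u + v) ^ card U = (\<Sum>A\<in>Pow U. (\<Prod>x\<in>A. u) * (\<Prod>x\<in>U - A. v))"
    using prod_add[OF assms, of "\<lambda>_. u" "\<lambda>_. v"] by simp
  also have "\<dots> = (\<Sum>A\<in>Pow U. u ^ card A * v ^ (card U - card A))"
    using assms by (intro sum.cong) (auto simp: card_Diff_subset finite_subset)
  finally show ?thesis ..
qed

lemma sum_Pow_Un_split:
  assumes "U \<inter> V = {}"
  shows "(\<Sum>A\<in>Pow (U \<union> V). f (A \<inter> U) (A \<inter> V)) = (\<Sum>A1\<in>Pow U. \<Sum>A2\<in>Pow V. f A1 A2)"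
proof -
  have "bij_betw (\<lambda>A. (A \<inter> U, A \<inter> V)) (Pow (U \<union> V)) (Pow U \<times> Pow V)"
    by (rule bij_betw_byWitness[where f' = "\<lambda>(A1, A2). A1 \<union> A2"]) (use assms in auto)
  then show ?thesis
    by (simp add: sum.cartesian_product sum.reindex_bij_betw[symmetric, where g = "case_prod f"])
qed

lemma sum_Pow_Un_split_mult:
  fixes f g :: "'a set \<Rightarrow> 'b::comm_semiring_1"
  assumes "U \<inter> V = {}"
  shows "(\<Sum>A\<in>Pow (U \<union> V). f (A \<inter> U) * g (A \<inter> V)) = (\<Sum>A\<in>Pow U. f A) * (\<Sum>A\<in>Pow V. g A)"
  using sum_Pow_Un_split[OF assms, of "\<lambda>A1 A2. f A1 * g A2"] by (simp add: sum_product)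

section \<open>Rank and Tutte polynomial of basis systems\<close>

text \<open>The basis axioms of \<^const>\<open>is_matroid\<close> without basis exchange, which none of the
  rank and Tutte polynomial computations below need.\<close>

definition basis_system :: "'a matroid \<Rightarrow> bool" where
  "basis_system M \<longleftrightarrow> finite (ground M) \<and> bases M \<noteq> {} \<and> (\<forall>B\<in>bases M. B \<subseteq> ground M)"

lemma basis_systemD:
  assumes "basis_system M"
  shows "finite (ground M)" "bases M \<noteq> {}" "\<And>B. B \<in> bases M \<Longrightarrow> B \<subseteq> ground M"
  using assms unfolding basis_system_def by auto

lemma finite_bases:
  assumes "basis_system M"
  shows "finite (bases M)"
  using assms unfolding basis_system_def by (meson Pow_iff finite_Pow_iff finite_subset subsetI)

lemma mrank_Int_ground:
  assumes "basis_system M"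
  shows "mrank M (A \<inter> ground M) = mrank M A"
proof -
  have "A \<inter> ground M \<inter> B = A \<inter> B" if "B \<in> bases M" for B
    using assms that unfolding basis_system_def by blast
  then show ?thesis unfolding mrank_def by (simp cong: image_cong)
qed

lemma mrank_le_card:
  assumes "basis_system M" "finite A"
  shows "mrank M A \<le> card A"
proof -
  have "finite (bases M)" "bases M \<noteq> {}"
    using finite_bases[OF assms(1)] basis_systemD(2)[OF assms(1)] .
  then show ?thesis
    unfolding mrank_def using assms(2) by (intro Max.boundedI) (auto intro: card_mono)
qed

lemma mrank_le_mrank_ground:
  assumes "basis_system M"
  shows "mrank M A \<le> mrank M (ground M)"
proof -
  have fin: "finite (bases M)" "bases M \<noteq> {}"
    using finite_bases[OF assms] basis_systemD(2)[OF assms] .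
  have "card (A \<inter> B) \<le> card (ground M \<inter> B)" if "B \<in> bases M" for B
    using assms that unfolding basis_system_def by (intro card_mono) auto
  then show ?thesis unfolding mrank_def using fin
    by (intro Max.boundedI) (auto intro: le_trans[OF _ Max_ge])
qed

lemma iso_refl: "iso M M"
  unfolding iso_def by (intro exI[of _ id]) simp

lemma tutte_iso:
  assumes "iso M N" "\<forall>B\<in>bases M. B \<subseteq> ground M"
  shows "tutte N = tutte M"
proof -
  obtain f where f: "bij_betw f (ground M) (ground N)" "bases N = (\<lambda>B. f ` B) ` bases M"
    using assms(1) unfolding iso_def by blast
  have inj: "inj_on f (ground M)" and ground_N: "ground N = f ` ground M"
    using f(1) by (auto simp: bij_betw_def)
  have card_image_f: "card (f ` A) = card A" if "A \<subseteq> ground M" for A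
    using card_image inj inj_on_subset that by blast
  have mrank_image: "mrank N (f ` A) = mrank M A" if "A \<subseteq> ground M" for A
  proof -
    have "card (f ` A \<inter> f ` B) = card (A \<inter> B)" if "B \<in> bases M" for B
      using \<open>A \<subseteq> ground M\<close> assms(2) that inj
      by (metis card_image_f inf.coboundedI1 inj_on_image_Int)
    then show ?thesis unfolding mrank_def f(2) image_image by (simp cong: image_cong)
  qed
  have "tutte N = (\<Sum>A\<in>(\<lambda>A. f ` A) ` Pow (ground M).
      (varX - 1) ^ (mrank N (ground N) - mrank N A) * (varY - 1) ^ (card A - mrank N A))"
    unfolding tutte_def using image_Pow_surj[OF ground_N[symmetric]] by simp
  also have "\<dots> = tutte M"
    unfolding tutte_def using inj_on_image_Pow[OF inj]
    by (simp add: sum.reindex ground_N mrank_image card_image_f)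
  finally show ?thesis .
qed

lemma iso_shift: "iso M (shift d M)"
  unfolding iso_def shift_def ground_def bases_def
  by (intro exI[of _ "(+) d"]) (auto simp: bij_betw_def)

lemma ground_shift: "ground (shift d M) = (+) d ` ground M"
  unfolding shift_def ground_def by simp

lemma bases_shift: "bases (shift d M) = (\<lambda>B. (+) d ` B) ` bases M"
  unfolding shift_def bases_def by simp

lemma basis_system_shift:
  assumes "basis_system M"
  shows "basis_system (shift d M)"
  using assms unfolding basis_system_def shift_def ground_def bases_def by auto

lemma tutte_shift:
  assumes "basis_system M"
  shows "tutte (shift d M) = tutte M"
  using tutte_iso[OF iso_shift] basis_systemD(3)[OF assms] by blast

lemma bases_dsum: "bases (dsum M N) = (\<lambda>(B, C). B \<union> C) ` (bases M \<times> bases N)"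
  unfolding dsum_def bases_def by auto

lemma ground_dsum: "ground (dsum M N) = ground M \<union> ground N"
  unfolding dsum_def ground_def by simp

lemma basis_system_dsum:
  assumes "basis_system M" "basis_system N"
  shows "basis_system (dsum M N)"
  using assms unfolding basis_system_def bases_dsum ground_dsum by auto

lemma mrank_dsum:
  assumes M: "basis_system M" and N: "basis_system N" and disj: "ground M \<inter> ground N = {}"
  shows "mrank (dsum M N) A = mrank M A + mrank N A"
proof -
  have fin: "finite (bases M)" "finite (bases N)" "bases M \<noteq> {}" "bases N \<noteq> {}"
    using finite_bases[OF M] finite_bases[OF N] basis_systemD(2)[OF M] basis_systemD(2)[OF N] by auto
  have card_split: "card (A \<inter> (B \<union> C)) = card (A \<inter> B) + card (A \<inter> C)"
    if "B \<in> bases M" "C \<in> bases N" for B C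
  proof -
    have "B \<subseteq> ground M" "C \<subseteq> ground N"
      using that basis_systemD(3)[OF M] basis_systemD(3)[OF N] by auto
    then have "finite B" "finite C" "B \<inter> C = {}"
      using basis_systemD(1)[OF M] basis_systemD(1)[OF N] disj by (auto intro: finite_subset)
    then show ?thesis by (simp add: Int_Un_distrib card_Un_disjoint disjoint_iff)
  qed
  obtain B0 where B0: "B0 \<in> bases M" "card (A \<inter> B0) = mrank M A"
    unfolding mrank_def using Max_in fin by (metis (no_types, lifting) finite_imageI image_iff image_is_empty)
  obtain C0 where C0: "C0 \<in> bases N" "card (A \<inter> C0) = mrank N A"
    unfolding mrank_def using Max_in fin by (metis (no_types, lifting) finite_imageI image_iff image_is_empty)
  show ?thesis
    unfolding mrank_def[of "dsum M N"] bases_dsum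
  proof (rule Max_eqI)
    show "finite ((\<lambda>B. card (A \<inter> B)) ` (\<lambda>(B, C). B \<union> C) ` (bases M \<times> bases N))"
      using fin by simp
    show "y \<le> mrank M A + mrank N A" if "y \<in> (\<lambda>B. card (A \<inter> B)) ` (\<lambda>(B, C). B \<union> C) ` (bases M \<times> bases N)" for y
      using that fin card_split unfolding mrank_def by (auto intro!: add_mono Max_ge)
    show "mrank M A + mrank N A \<in> (\<lambda>B. card (A \<inter> B)) ` (\<lambda>(B, C). B \<union> C) ` (bases M \<times> bases N)"
      using B0 C0 card_split by (auto intro!: image_eqI[of _ _ "B0 \<union> C0"])
  qed
qed

lemma tutte_dsum:
  assumes M: "basis_system M" and N: "basis_system N" and disj: "ground M \<inter> ground N = {}"
  shows "tutte (dsum M N) = tutte M * tutte N"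
proof -
  let ?rM = "mrank M" and ?rN = "mrank N" and ?EM = "ground M" and ?EN = "ground N"
  let ?term = "\<lambda>L A. (varX - 1) ^ (mrank L (ground L) - mrank L A) * (varY - 1) ^ (card A - mrank L A)"
  have rank: "mrank (dsum M N) A = ?rM (A \<inter> ?EM) + ?rN (A \<inter> ?EN)" for A
    using mrank_dsum[OF assms] mrank_Int_ground[OF M] mrank_Int_ground[OF N] by simp
  have rank_ground: "mrank (dsum M N) (ground (dsum M N)) = ?rM ?EM + ?rN ?EN"
    unfolding rank ground_dsum by (simp add: Int_absorb1)
  have "?term (dsum M N) A = ?term M (A \<inter> ?EM) * ?term N (A \<inter> ?EN)" if "A \<subseteq> ?EM \<union> ?EN" for A
  proof -
    have fin: "finite (A \<inter> ?EM)" "finite (A \<inter> ?EN)"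
      using basis_systemD(1)[OF M] basis_systemD(1)[OF N] by auto
    have "card A = card (A \<inter> ?EM) + card (A \<inter> ?EN)"
      using that fin disj card_Un_disjoint[OF fin] by (metis Int_Un_distrib Int_absorb2 inf_commute inf_sup_aci(2) Int_empty_right)
    moreover have "?rM (A \<inter> ?EM) \<le> ?rM ?EM" "?rN (A \<inter> ?EN) \<le> ?rN ?EN"
      using mrank_le_mrank_ground[OF M] mrank_le_mrank_ground[OF N] by auto
    moreover have "?rM (A \<inter> ?EM) \<le> card (A \<inter> ?EM)" "?rN (A \<inter> ?EN) \<le> card (A \<inter> ?EN)"
      using mrank_le_card[OF M] mrank_le_card[OF N] fin by auto
    ultimately have
      "mrank (dsum M N) (ground (dsum M N)) - mrank (dsum M N) A = (?rM ?EM - ?rM (A \<inter> ?EM)) + (?rN ?EN - ?rN (A \<inter> ?EN))"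
      "card A - mrank (dsum M N) A = (card (A \<inter> ?EM) - ?rM (A \<inter> ?EM)) + (card (A \<inter> ?EN) - ?rN (A \<inter> ?EN))"
      using rank_ground rank[of A] by auto
    then show ?thesis by (simp add: power_add ac_simps)
  qed
  then have "tutte (dsum M N) = (\<Sum>A\<in>Pow (?EM \<union> ?EN). ?term M (A \<inter> ?EM) * ?term N (A \<inter> ?EN))"
    unfolding tutte_def ground_dsum by (intro sum.cong) auto
  also have "\<dots> = tutte M * tutte N"
    unfolding tutte_def by (rule sum_Pow_Un_split_mult[OF disj])
  finally show ?thesis .
qed

lemma tutte_single_basis:
  assumes fin: "finite (ground M)" and bases_M: "bases M = {B}" and B: "B \<subseteq> ground M"
  shows "tutte M = varX ^ card B * varY ^ (card (ground M) - card B)"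
proof -
  let ?E = "ground M"
  have rank: "mrank M A = card (A \<inter> B)" for A
    unfolding mrank_def bases_M by simp
  have E_split: "B \<union> (?E - B) = ?E" "B \<inter> (?E - B) = {}"
    using B by auto
  have finB: "finite B" "finite (?E - B)"
    using fin B finite_subset by auto
  have "(varX - 1) ^ (mrank M ?E - mrank M A) * (varY - 1) ^ (card A - mrank M A)
      = (varX - 1) ^ (card B - card (A \<inter> B)) * (varY - 1) ^ card (A \<inter> (?E - B))"
    if "A \<subseteq> ?E" for A
  proof -
    have "A \<inter> (?E - B) = A - B" using that by auto
    moreover have "finite A" using that fin finite_subset by blast
    ultimately have "card A = card (A \<inter> B) + card (A \<inter> (?E - B))"
      by (simp add: card_Int_Diff)
    then show ?thesis unfolding rank using B by (simp add: Int_absorb1)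
  qed
  then have "tutte M = (\<Sum>A\<in>Pow ?E.
      (varX - 1) ^ (card B - card (A \<inter> B)) * (varY - 1) ^ card (A \<inter> (?E - B)))"
    unfolding tutte_def by (intro sum.cong) auto
  also have "\<dots> = (\<Sum>S\<in>Pow B. 1 ^ card S * (varX - 1) ^ (card B - card S))
      * (\<Sum>S\<in>Pow (?E - B). (varY - 1) ^ card S * 1 ^ (card (?E - B) - card S))"
    using sum_Pow_Un_split_mult[OF E_split(2)] unfolding E_split(1) by simp
  also have "\<dots> = varX ^ card B * varY ^ (card ?E - card B)"
    using sum_Pow_binomial[OF finB(1), of 1 "varX - 1"] sum_Pow_binomial[OF finB(2), of "varY - 1" 1]
      finB B fin by (simp add: card_Diff_subset)
  finally show ?thesis .
qed

section \<open>Uniform and minimal matroids\<close>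

lemma ground_unif: "ground (unif r m) = {0..<m}"
  unfolding unif_def ground_def by simp

lemma bases_unif_trivial:
  assumes "r = 0 \<or> r = m"
  shows "bases (unif r m) = {{0..<r}}"
proof -
  have "B = {0..<r}" if "B \<subseteq> {0..<m}" "card B = r" for B
    using assms
  proof
    assume "r = 0"
    moreover have "finite B" using finite_subset[OF that(1)] by simp
    ultimately show ?thesis using that by simp
  next
    assume "r = m"
    then show ?thesis using that card_subset_eq[of "{0..<m}" B] by simp
  qed
  moreover have "{0..<r} \<subseteq> {0..<m}" using assms by auto
  moreover have "card {0..<r} = r" by simp
  ultimately show ?thesis unfolding unif_def bases_def snd_conv by blast
qed

lemma basis_system_unif:
  assumes "r \<le> m"
  shows "basis_system (unif r m)"
proof -
  have "{0..<r} \<in> bases (unif r m)" "\<forall>B\<in>bases (unif r m). B \<subseteq> ground (unif r m)"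
    using assms unfolding unif_def bases_def ground_def by auto
  then show ?thesis unfolding basis_system_def ground_unif by auto
qed

lemma tutte_unif_0: "tutte (unif 0 m) = varY ^ m"
  using tutte_single_basis[of "unif 0 m" "{}"] bases_unif_trivial[of 0 m] ground_unif[of 0 m]
  by simp

lemma tutte_unif_full: "tutte (unif m m) = varX ^ m"
  using tutte_single_basis[of "unif m m" "{0..<m}"] bases_unif_trivial[of m m] ground_unif[of m m]
  by simp

lemma ground_minmat: "ground (minmat a b) = {0..<b}"
  unfolding minmat_def ground_def by simp

lemma basis_system_minmat:
  assumes "a \<le> b"
  shows "basis_system (minmat a b)"
proof -
  have "{0..<a} \<in> bases (minmat a b)" "\<forall>B\<in>bases (minmat a b). B \<subseteq> ground (minmat a b)"
    using assms unfolding minmat_def bases_def ground_def by auto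
  then show ?thesis unfolding basis_system_def ground_minmat by auto
qed

lemma minmat_eq_unif:
  assumes "a = 0 \<or> a = b"
  shows "minmat a b = unif a b"
proof -
  have "a \<le> card (B \<inter> {0..<a}) + 1" if "B \<subseteq> {0..<b}" "card B = a" for B
    using assms that by (auto simp: Int_absorb2)
  then show ?thesis unfolding minmat_def unif_def by auto
qed

lemma bases_minmat:
  assumes "a \<le> b"
  shows "bases (minmat a b) = {B. B \<subseteq> {0..<a} \<union> {a..<b} \<and> card B = a \<and> a \<le> card (B \<inter> {0..<a}) + 1}"
  unfolding minmat_def bases_def using assms by (auto simp: ivl_disj_un_two(3))

lemma card_Int_minmat_basis_le:
  assumes "a \<le> b" "B \<in> bases (minmat a b)"
  shows "card (A \<inter> B) \<le> min (card (A \<inter> {0..<a}) + of_bool (A \<inter> {a..<b} \<noteq> {})) a"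
proof -
  let ?P = "{0..<a}" and ?Q = "{a..<b}"
  have B: "B \<subseteq> ?P \<union> ?Q" "card B = a" "a \<le> card (B \<inter> ?P) + 1"
    using assms unfolding bases_minmat[OF assms(1)] by auto
  have "finite B" using B(1) finite_subset by auto
  have card_split: "card C = card (C \<inter> ?P) + card (C \<inter> ?Q)" if "C \<subseteq> B" for C
  proof -
    have "C = (C \<inter> ?P) \<union> (C \<inter> ?Q)" "(C \<inter> ?P) \<inter> (C \<inter> ?Q) = {}"
      using that B(1) by auto
    moreover have "finite C" using that \<open>finite B\<close> finite_subset by blast
    ultimately show ?thesis by (metis card_Un_disjoint finite_Int)
  qed
  have "card (A \<inter> B \<inter> ?Q) \<le> of_bool (A \<inter> ?Q \<noteq> {})"
  proof -
    have "card (A \<inter> B \<inter> ?Q) \<le> card (B \<inter> ?Q)" by (intro card_mono) auto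
    moreover have "A \<inter> ?Q = {} \<Longrightarrow> A \<inter> B \<inter> ?Q = {}" by blast
    ultimately show ?thesis using card_split[of B] B(2,3) by auto
  qed
  moreover have "card (A \<inter> B \<inter> ?P) \<le> card (A \<inter> ?P)" by (intro card_mono) auto
  moreover have "card (A \<inter> B) \<le> a"
    using B(2) \<open>finite B\<close> by (metis card_mono inf_le2)
  ultimately show ?thesis using card_split[of "A \<inter> B"] by simp
qed

lemma mrank_minmat:
  assumes "a \<le> b"
  shows "mrank (minmat a b) A = min (card (A \<inter> {0..<a}) + of_bool (A \<inter> {a..<b} \<noteq> {})) a"
proof -
  let ?P = "{0..<a}" and ?Q = "{a..<b}"
  let ?r = "min (card (A \<inter> ?P) + of_bool (A \<inter> ?Q \<noteq> {})) a"
  have attained: "\<exists>B\<in>bases (minmat a b). card (A \<inter> B) = ?r"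
  proof (cases "A \<inter> ?Q \<noteq> {} \<and> card (A \<inter> ?P) < a")
    case True
    then obtain q where q: "q \<in> A" "q \<in> ?Q" by blast
    from True obtain p where p: "p \<in> ?P" "p \<notin> A"
      by (metis Int_absorb1 card_atLeastLessThan diff_zero less_irrefl subsetI)
    have "insert q (?P - {p}) \<in> bases (minmat a b)"
      unfolding bases_minmat[OF assms] using p q
      by (auto simp: card_insert_if insert_Diff_if Int_insert_left Int_absorb2)
    moreover have "A \<inter> insert q (?P - {p}) = insert q (A \<inter> ?P)" using p q by auto
    ultimately show ?thesis using q True by (intro bexI[of _ "insert q (?P - {p})"]) auto
  next
    case False
    moreover have "?P \<in> bases (minmat a b)"
      unfolding bases_minmat[OF assms] by auto
    moreover have "card (A \<inter> ?P) \<le> a"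
      by (metis card_atLeastLessThan card_mono diff_zero finite_atLeastLessThan inf_le2)
    ultimately show ?thesis by (intro bexI[of _ ?P]) auto
  qed
  have "finite (bases (minmat a b))"
    unfolding bases_minmat[OF assms] by (rule finite_subset[of _ "Pow (?P \<union> ?Q)"]) auto
  then show ?thesis
    unfolding mrank_def
  proof (rule Max_eqI[OF finite_imageI])
    show "y \<le> ?r" if "y \<in> (\<lambda>B. card (A \<inter> B)) ` bases (minmat a b)" for y
      using that card_Int_minmat_basis_le[OF assms] by blast
    show "?r \<in> (\<lambda>B. card (A \<inter> B)) ` bases (minmat a b)"
      using attained by (metis image_eqI)
  qed
qed

text \<open>Each term on the right is a function of \<open>s\<close> times a function of \<open>t\<close>, so summing over
  \<open>S\<^sub>1 \<subseteq> P\<close> and \<open>S\<^sub>2 \<subseteq> Q\<close> factorises.\<close>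

lemma minmat_term_split:
  fixes X Y :: "'b::comm_ring_1" and s t p :: nat
  assumes "s \<le> p"
  defines "r \<equiv> min (s + of_bool (t \<noteq> 0)) p"
  shows "X * Y * (X ^ (p - r) * Y ^ (s + t - r))
    = X * Y * X ^ (p - s) * of_bool (t = 0) + (X ^ (p - s) - of_bool (s = p)) * (Y ^ t - of_bool (t = 0))
      + X * Y * of_bool (s = p) * (Y ^ t - of_bool (t = 0))"
proof (cases "t = 0 \<or> s = p")
  case True
  then show ?thesis using assms by (auto simp: r_def)
next
  case False
  then have "p - r = p - Suc s" "s + t - r = t - 1" "p - s = Suc (p - Suc s)" "t = Suc (t - 1)"
    using assms by (auto simp: r_def)
  then have "X * Y * (X ^ (p - r) * Y ^ (s + t - r)) = X ^ (p - s) * Y ^ t"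
    by (metis mult.assoc mult.left_commute power_Suc)
  then show ?thesis using False by simp
qed

lemma sum_corank_nullity_minmat:
  fixes X Y :: "'b::comm_ring_1" and P :: "'a set" and Q :: "'c set"
  assumes fin: "finite P" "finite Q"
  defines "r S1 S2 \<equiv> min (card S1 + of_bool (S2 \<noteq> {})) (card P)"
  shows "X * Y * (\<Sum>S1\<in>Pow P. \<Sum>S2\<in>Pow Q. X ^ (card P - r S1 S2) * Y ^ (card S1 + card S2 - r S1 S2))
    = X * Y * ((X + 1) ^ card P + (Y + 1) ^ card Q - 1) + ((X + 1) ^ card P - 1) * ((Y + 1) ^ card Q - 1)"
proof -
  let ?\<alpha> = "\<lambda>S1. X ^ (card P - card S1)" and ?\<beta> = "\<lambda>S2. Y ^ card S2"
  let ?\<delta>P = "\<lambda>S1. of_bool (S1 = P) :: 'b" and ?\<delta>0 = "\<lambda>S2. of_bool (S2 = {}) :: 'b"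
  have "X * Y * (\<Sum>S1\<in>Pow P. \<Sum>S2\<in>Pow Q. X ^ (card P - r S1 S2) * Y ^ (card S1 + card S2 - r S1 S2))
      = (\<Sum>S1\<in>Pow P. \<Sum>S2\<in>Pow Q. (X * Y * ?\<alpha> S1) * ?\<delta>0 S2 + (?\<alpha> S1 - ?\<delta>P S1) * (?\<beta> S2 - ?\<delta>0 S2)
          + (X * Y * ?\<delta>P S1) * (?\<beta> S2 - ?\<delta>0 S2))"
    unfolding sum_distrib_left
  proof (intro sum.cong refl)
    fix S1 S2 assume S: "S1 \<in> Pow P" "S2 \<in> Pow Q"
    then have "card S1 \<le> card P" "(S1 = P) = (card S1 = card P)" "(S2 = {}) = (card S2 = 0)"
      using fin card_subset_eq[of P S1] finite_subset[of S2 Q] by (auto intro: card_mono)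
    then show "X * Y * (X ^ (card P - r S1 S2) * Y ^ (card S1 + card S2 - r S1 S2))
        = (X * Y * ?\<alpha> S1) * ?\<delta>0 S2 + (?\<alpha> S1 - ?\<delta>P S1) * (?\<beta> S2 - ?\<delta>0 S2) + (X * Y * ?\<delta>P S1) * (?\<beta> S2 - ?\<delta>0 S2)"
      using minmat_term_split[of "card S1" "card P" X Y "card S2"] by (simp add: r_def)
  qed
  also have "\<dots> = (\<Sum>S1\<in>Pow P. X * Y * ?\<alpha> S1) * (\<Sum>S2\<in>Pow Q. ?\<delta>0 S2)
      + (\<Sum>S1\<in>Pow P. ?\<alpha> S1 - ?\<delta>P S1) * (\<Sum>S2\<in>Pow Q. ?\<beta> S2 - ?\<delta>0 S2)
      + (\<Sum>S1\<in>Pow P. X * Y * ?\<delta>P S1) * (\<Sum>S2\<in>Pow Q. ?\<beta> S2 - ?\<delta>0 S2)"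
    by (simp only: sum.distrib sum_product)
  also have "\<dots> = X * Y * ((X + 1) ^ card P + (Y + 1) ^ card Q - 1) + ((X + 1) ^ card P - 1) * ((Y + 1) ^ card Q - 1)"
    using sum_Pow_binomial[OF fin(1), of 1 X] sum_Pow_binomial[OF fin(2), of Y 1] fin
    by (simp add: sum_subtractf sum_distrib_left[symmetric] algebra_simps)
  finally show ?thesis .
qed

lemma tutte_minmat:
  assumes "a \<le> b"
  shows "(varX - 1) * (varY - 1) * tutte (minmat a b) =
    (varX - 1) * (varY - 1) * (varX ^ a + varY ^ (b - a) - 1) + (varX ^ a - 1) * (varY ^ (b - a) - 1)"
proof -
  let ?P = "{0..<a}" and ?Q = "{a..<b}"
  let ?r = "\<lambda>S1 S2. min (card S1 + of_bool (S2 \<noteq> {})) (card ?P)"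
  let ?h = "\<lambda>S1 S2. (varX - 1) ^ (card ?P - ?r S1 S2) * (varY - 1) ^ (card S1 + card S2 - ?r S1 S2)"
  have ground: "ground (minmat a b) = ?P \<union> ?Q" and disj: "?P \<inter> ?Q = {}"
    using assms by (auto simp: minmat_def ground_def)
  have rank: "mrank (minmat a b) A = ?r (A \<inter> ?P) (A \<inter> ?Q)" for A
    using mrank_minmat[OF assms] by simp
  have rank_ground: "mrank (minmat a b) (ground (minmat a b)) = card ?P"
    unfolding rank ground by (simp add: Int_absorb1)
  have card_A: "card A = card (A \<inter> ?P) + card (A \<inter> ?Q)" if "A \<subseteq> ?P \<union> ?Q" for A
  proof -
    have "A = (A \<inter> ?P) \<union> (A \<inter> ?Q)" using that by auto
    moreover have "finite A" using that finite_subset by blast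
    ultimately show ?thesis using disj by (metis card_Un_disjoint finite_Int inf_commute inf_left_commute inf_bot_right inf_assoc)
  qed
  have "tutte (minmat a b) = (\<Sum>A\<in>Pow (?P \<union> ?Q). ?h (A \<inter> ?P) (A \<inter> ?Q))"
    unfolding tutte_def rank_ground unfolding ground rank using card_A by (intro sum.cong) auto
  also have "\<dots> = (\<Sum>S1\<in>Pow ?P. \<Sum>S2\<in>Pow ?Q. ?h S1 S2)"
    by (rule sum_Pow_Un_split[OF disj])
  finally show ?thesis
    using sum_corank_nullity_minmat[of ?P ?Q "varX - 1" "varY - 1"] assms by simp
qed

section \<open>The family \<open>U\<^sub>0\<^sub>,\<^sub>m \<oplus> T\<^sub>k\<^sub>-\<^sub>l\<^sub>,\<^sub>n\<^sub>-\<^sub>l\<^sub>-\<^sub>m \<oplus> U\<^sub>l\<^sub>,\<^sub>l\<close>\<close>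

lemma special_components:
  assumes "k \<le> n" "l \<le> k" "m \<le> n - k"
  shows "basis_system (unif 0 m)" "basis_system (shift m (minmat (k - l) (n - l - m)))"
    "basis_system (shift (n - l) (unif l l))"
    "ground (unif 0 m) = {0..<m}" "ground (shift m (minmat (k - l) (n - l - m))) = {m..<n - l}"
    "ground (shift (n - l) (unif l l)) = {n - l..<n}"
proof -
  have "k - l \<le> n - l - m" using assms by arith
  then show "basis_system (unif 0 m)" "basis_system (shift m (minmat (k - l) (n - l - m)))"
    "basis_system (shift (n - l) (unif l l))"
    by (auto intro: basis_system_unif basis_system_minmat basis_system_shift)
  show "ground (unif 0 m) = {0..<m}"
    by (rule ground_unif)
  show "ground (shift m (minmat (k - l) (n - l - m))) = {m..<n - l}"
    using image_add_atLeastLessThan[of m 0 "n - l - m"] assms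
    unfolding ground_shift ground_minmat by (simp add: add.commute)
  show "ground (shift (n - l) (unif l l)) = {n - l..<n}"
    using image_add_atLeastLessThan[of "n - l" 0 l] assms
    unfolding ground_shift ground_unif by (simp add: add.commute)
qed

lemma basis_system_special:
  assumes "k \<le> n" "l \<le> k" "m \<le> n - k"
  shows "basis_system (special k n l m)"
  unfolding special_def using special_components[OF assms] by (intro basis_system_dsum)

lemma ground_special:
  assumes "k \<le> n" "l \<le> k" "m \<le> n - k"
  shows "ground (special k n l m) = {0..<n}"
  using special_components[OF assms] assms unfolding special_def ground_dsum by auto

lemma tutte_special:
  assumes "k \<le> n" "l \<le> k" "m \<le> n - k"
  shows "tutte (special k n l m) = varY ^ m * (tutte (minmat (k - l) (n - l - m)) * varX ^ l)"
proof -
  note c = special_components[OF assms]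
  have "basis_system (dsum (shift m (minmat (k - l) (n - l - m))) (shift (n - l) (unif l l)))"
    by (rule basis_system_dsum[OF c(2,3)])
  moreover have "ground (unif 0 m) \<inter> ground (dsum (shift m (minmat (k - l) (n - l - m))) (shift (n - l) (unif l l))) = {}"
    unfolding ground_dsum c(4-6) using assms by auto
  moreover have "tutte (shift m (minmat (k - l) (n - l - m))) = tutte (minmat (k - l) (n - l - m))"
    using assms by (intro tutte_shift basis_system_minmat) arith
  ultimately show ?thesis
    unfolding special_def using c
    by (simp add: tutte_dsum tutte_shift basis_system_unif tutte_unif_0 tutte_unif_full)
qed

lemma special_degenerate:
  assumes "k \<le> n" "l \<le> k" "m \<le> n - k" "l = k \<or> m = n - k"
  shows "special k n l m = ({0..<n}, {{n - k..<n}})"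
proof -
  have trivial: "k - l = 0 \<or> k - l = n - l - m"
    using assms by auto
  have "bases (shift m (minmat (k - l) (n - l - m))) = {(+) m ` {0..<k - l}}"
    unfolding minmat_eq_unif[OF trivial] bases_shift bases_unif_trivial[OF trivial] by simp
  then have "bases (shift m (minmat (k - l) (n - l - m))) = {{m..<m + (k - l)}}"
    using image_add_atLeastLessThan[of m 0 "k - l"] by (simp add: add.commute)
  moreover have "bases (shift (n - l) (unif l l)) = {{n - l..<n}}"
    using image_add_atLeastLessThan[of "n - l" 0 l] assms
    by (simp add: bases_shift bases_unif_trivial add.commute)
  ultimately have "bases (special k n l m) = {{m..<m + (k - l)} \<union> {n - l..<n}}"
    unfolding special_def by (simp add: bases_dsum bases_unif_trivial)
  also have "\<dots> = {{n - k..<n}}"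
    using assms by auto
  finally show ?thesis
    using ground_special[OF assms(1-3)] by (metis bases_def ground_def prod.collapse)
qed

text \<open>The pair \<open>(k, e)\<close> stands for all degenerate parameters \<open>l = k\<close> or \<open>m = e\<close>.\<close>

definition special_params :: "nat \<Rightarrow> nat \<Rightarrow> (nat \<times> nat) set" where
  "special_params k e = {..<k} \<times> {..<e} \<union> {(k, e)}"

lemma special_params_cases:
  assumes "a \<in> special_params k e"
  obtains l m where "a = (l, m)" "l < k" "m < e" | "a = (k, e)"
  using assms unfolding special_params_def by auto

lemma special_params_le:
  assumes "a \<in> special_params k e"
  shows "fst a \<le> k" "snd a \<le> e"
  using assms by (auto elim: special_params_cases)

lemma finite_special_params: "finite (special_params k e)"
  unfolding special_params_def by simp

lemma card_special_params: "card (special_params k e) = k * e + 1"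
  unfolding special_params_def by (simp add: card_cartesian_product)

lemma special_family_eq:
  assumes "k \<le> n"
  shows "special_family k n = case_prod (special k n) ` special_params k (n - k)"
proof
  show "case_prod (special k n) ` special_params k (n - k) \<subseteq> special_family k n"
    unfolding special_family_def using special_params_le by fastforce
  show "special_family k n \<subseteq> case_prod (special k n) ` special_params k (n - k)"
  proof
    fix M assume "M \<in> special_family k n"
    then obtain l m where M: "M = special k n l m" "l \<le> k" "m \<le> n - k"
      unfolding special_family_def by blast
    show "M \<in> case_prod (special k n) ` special_params k (n - k)"
    proof (cases "l < k \<and> m < n - k")
      case True
      then show ?thesis using M unfolding special_params_def by auto
    next
      case False
      then have "M = special k n k (n - k)"
        using M special_degenerate[OF assms] by auto
      then show ?thesis unfolding special_params_def by auto
    qed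
  qed
qed

definition special_poly :: "nat \<Rightarrow> nat \<Rightarrow> nat \<times> nat \<Rightarrow> int poly poly" where
  "special_poly k e = (\<lambda>(l, m). varX ^ l * varY ^ m *
     ((varX - 1) * (varY - 1) * (varX ^ (k - l) + varY ^ (e - m) - 1) + (varX ^ (k - l) - 1) * (varY ^ (e - m) - 1)))"

lemma scaled_tutte_special:
  assumes "k \<le> n" "l \<le> k" "m \<le> n - k"
  shows "(varX - 1) * (varY - 1) * tutte (special k n l m) = special_poly k (n - k) (l, m)"
proof -
  have "k - l \<le> n - l - m" "n - l - m - (k - l) = n - k - m"
    using assms by arith+
  then show ?thesis
    unfolding tutte_special[OF assms] special_poly_def
    using tutte_minmat[of "k - l" "n - l - m"] by (simp add: ac_simps)
qed

section \<open>Linear independence of the Tutte polynomials\<close>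

lemma coeff_special_poly_below:
  assumes "j < m"
  shows "coeff (special_poly k e (l, m)) j = 0"
proof -
  have "varY ^ m = (monom 1 m :: int poly poly)"
    by (simp add: varY_def monom_altdef)
  then show ?thesis
    using assms by (simp add: special_poly_def mult.left_commute[of "varX ^ l"] mult.assoc coeff_monom_mult)
qed

lemma coeff_special_poly_lowest:
  assumes "l \<le> k" "m < e"
  shows "coeff (special_poly k e (l, m)) m = monom 1 (l + 1) - monom 1 (k + 1)"
proof -
  let ?x = "[:0, 1:] :: int poly"
  define R where "R = (varX - 1) * (varY - 1) * (varX ^ (k - l) + varY ^ (e - m) - 1)
    + (varX ^ (k - l) - 1) * (varY ^ (e - m) - 1)"
  have "special_poly k e (l, m) = monom 1 m * (varX ^ l * R)"
    by (simp add: special_poly_def R_def varY_def monom_altdef ac_simps)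
  then have "coeff (special_poly k e (l, m)) m = poly (varX ^ l * R) 0"
    by (simp add: coeff_monom_mult poly_0_coeff_0)
  also have "\<dots> = ?x ^ l * ((?x - 1) * (- 1) * (?x ^ (k - l) - 1) + (?x ^ (k - l) - 1) * (- 1))"
    using assms by (simp add: R_def varX_def varY_def zero_power)
  also have "\<dots> = ?x ^ (l + 1) - ?x ^ (l + 1 + (k - l))"
    by (simp add: algebra_simps power_add)
  also have "\<dots> = monom 1 (l + 1) - monom 1 (k + 1)"
    using assms by (simp add: monom_altdef)
  finally show ?thesis .
qed

lemma coeff_special_poly_triangular:
  assumes "a \<in> special_params k e" "l < k" "m < e" "m \<le> snd a"
  shows "coeff (coeff (special_poly k e a) m) (l + 1) = of_bool (a = (l, m))"
  using assms(1)
proof (cases rule: special_params_cases)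
  case (1 l' m')
  show ?thesis
  proof (cases "m < m'")
    case True
    then show ?thesis using 1 by (simp add: coeff_special_poly_below)
  next
    case False
    then have "m' = m" using 1 assms(4) by simp
    then show ?thesis using 1 assms(2,3) by (simp add: coeff_special_poly_lowest)
  qed
next
  case 2
  then show ?thesis using assms(3) by (simp add: coeff_special_poly_below)
qed

lemma special_poly_corner_nonzero: "special_poly k e (k, e) \<noteq> 0"
proof -
  have "varX \<noteq> 0" "varY \<noteq> 0" "varX - 1 \<noteq> 0" "varY - 1 \<noteq> 0"
    by (simp_all add: varX_def varY_def one_pCons)
  then show ?thesis by (simp add: special_poly_def)
qed

lemma coeff_coeff_of_int_mult:
  "coeff (coeff (of_int c * p) j) i = c * coeff (coeff (p :: int poly poly) j) i"
  by (simp add: of_int_poly)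

lemma special_poly_independent:
  assumes I: "I \<subseteq> special_params k e" and zero: "(\<Sum>a\<in>I. of_int (c a) * special_poly k e a) = 0"
  shows "\<forall>a\<in>I. c a = 0"
proof -
  have fin: "finite I" using I finite_special_params finite_subset by blast
  have coeff_zero: "(\<Sum>a\<in>I. c a * coeff (coeff (special_poly k e a) j) i) = 0" for j i
    using arg_cong[OF zero, of "\<lambda>p. coeff (coeff p j) i"] by (simp add: coeff_sum coeff_coeff_of_int_mult)
  have generic: "c (l, m) = 0" if "(l, m) \<in> I" "m < e" for l m
    using that
  proof (induction m arbitrary: l rule: less_induct)
    \<comment> \<open>once all coefficients with smaller \<open>m\<close> vanish, the coefficient of \<open>y\<^sup>m x\<^sup>l\<^sup>+\<^sup>1\<close> isolates \<open>c (l, m)\<close>\<close>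
    case (less m)
    have "l < k" using less.prems I by (auto elim: special_params_cases)
    have "(\<Sum>a\<in>I. c a * coeff (coeff (special_poly k e a) m) (l + 1)) = (\<Sum>a\<in>I. c a * of_bool (a = (l, m)))"
    proof (rule sum.cong[OF refl])
      fix a assume a: "a \<in> I"
      show "c a * coeff (coeff (special_poly k e a) m) (l + 1) = c a * of_bool (a = (l, m))"
      proof (cases "snd a < m")
        case True
        then have "c a = 0" using less.IH[of "snd a" "fst a"] a less.prems(2) by simp
        then show ?thesis by simp
      next
        case False
        then show ?thesis using coeff_special_poly_triangular[of a k e l m] a I \<open>l < k\<close> less.prems(2) by auto
      qed
    qed
    then show "c (l, m) = 0" using coeff_zero[of m "l + 1"] fin less.prems(1) by simp
  qed
  have others: "c a = 0" if "a \<in> I" "a \<noteq> (k, e)" for a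
    using that I by (auto elim!: special_params_cases intro: generic)
  have corner: "c (k, e) = 0" if "(k, e) \<in> I"
  proof -
    have "(\<Sum>a\<in>I. of_int (c a) * special_poly k e a) = of_int (c (k, e)) * special_poly k e (k, e)"
      using fin that others by (subst sum.mono_neutral_right[of I "{(k, e)}"]) auto
    then show ?thesis using zero special_poly_corner_nonzero[of k e] by simp
  qed
  show ?thesis using others corner by blast
qed

lemma inj_on_special_poly: "inj_on (special_poly k e) (special_params k e)"
proof (rule inj_onI, rule ccontr)
  fix a b assume ab: "a \<in> special_params k e" "b \<in> special_params k e"
    and eq: "special_poly k e a = special_poly k e b" and "a \<noteq> b"
  let ?c = "\<lambda>x. if x = a then 1 else - 1 :: int"
  have "(\<Sum>x\<in>{a, b}. of_int (?c x) * special_poly k e x) = 0"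
    using eq \<open>a \<noteq> b\<close> by simp
  then have "?c a = 0"
    using special_poly_independent[of "{a, b}" k e ?c] ab by blast
  then show False by simp
qed

lemma inj_on_tutte_special:
  assumes "k \<le> n"
  shows "inj_on (tutte \<circ> case_prod (special k n)) (special_params k (n - k))"
proof -
  have "special_poly k (n - k) a = (varX - 1) * (varY - 1) * (tutte \<circ> case_prod (special k n)) a"
    if "a \<in> special_params k (n - k)" for a
  proof -
    obtain l m where "a = (l, m)" by force
    then show ?thesis using scaled_tutte_special[OF assms, of l m] special_params_le[OF that] by simp
  qed
  then show ?thesis
    using inj_on_special_poly[of k "n - k"] by (auto simp: inj_on_def)
qed

lemma inj_on_tutte_special_family:
  assumes "k \<le> n"
  shows "inj_on tutte (special_family k n)"
  unfolding special_family_eq[OF assms] using inj_on_tutte_special[OF assms] by (rule inj_on_imageI)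

lemma iso_special_family_iff:
  assumes "k \<le> n" "M \<in> special_family k n" "N \<in> special_family k n"
  shows "iso M N \<longleftrightarrow> M = N"
proof
  assume "iso M N"
  moreover obtain l m where "M = special k n l m" "l \<le> k" "m \<le> n - k"
    using assms(2) unfolding special_family_def by blast
  ultimately have "tutte N = tutte M"
    using tutte_iso basis_systemD(3)[OF basis_system_special[OF assms(1)]] by blast
  then show "M = N" using inj_on_tutte_special_family[OF assms(1)] assms(2,3) by (metis inj_onD)
qed (simp add: iso_refl)

lemma card_special_family:
  assumes "k \<le> n"
  shows "card (special_family k n) = k * (n - k) + 1"
proof -
  have "inj_on (case_prod (special k n)) (special_params k (n - k))"
    using inj_on_tutte_special[OF assms] by (rule inj_on_imageI2)
  then show ?thesis
    unfolding special_family_eq[OF assms] by (simp add: card_image card_special_params)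
qed

lemma special_family_independent:
  assumes "k \<le> n" "R \<subseteq> special_family k n" "(\<Sum>N\<in>R. of_int (c N) * tutte N) = 0"
  shows "\<forall>N\<in>R. c N = 0"
proof -
  let ?S = "case_prod (special k n)"
  define I where "I = {a \<in> special_params k (n - k). ?S a \<in> R}"
  have inj: "inj_on ?S I"
    using inj_on_imageI2[OF inj_on_tutte_special[OF assms(1)]] unfolding I_def by (rule inj_on_subset) auto
  have R: "R = ?S ` I"
    using assms(2) unfolding I_def special_family_eq[OF assms(1)] by blast
  have "(\<Sum>a\<in>I. of_int (c (?S a)) * special_poly k (n - k) a)
      = (varX - 1) * (varY - 1) * (\<Sum>a\<in>I. of_int (c (?S a)) * tutte (?S a))"
    unfolding sum_distrib_left
    using scaled_tutte_special[OF assms(1)] special_params_le unfolding I_def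
    by (intro sum.cong) (auto simp: ac_simps)
  also have "\<dots> = 0"
    using assms(3) unfolding R sum.reindex[OF inj] by simp
  finally have "\<forall>a\<in>I. c (?S a) = 0"
    by (rule special_poly_independent[rotated]) (simp add: I_def)
  then show ?thesis unfolding R by auto
qed

theorem proposition4p12:
  fixes k n :: nat
  assumes "k \<le> n"
  shows "card ((\<lambda>M. {N \<in> special_family k n. iso M N}) ` special_family k n) = k * (n - k) + 1
    \<and> (\<forall>R. R \<subseteq> special_family k n \<and> (\<forall>M\<in>special_family k n. \<exists>!N. N \<in> R \<and> iso M N) \<longrightarrow>
         (\<forall>c :: nat matroid \<Rightarrow> int. (\<Sum>N\<in>R. of_int (c N) * tutte N) = 0 \<longrightarrow> (\<forall>N\<in>R. c N = 0)))"
proof -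
  have "(\<lambda>M. {N \<in> special_family k n. iso M N}) ` special_family k n = (\<lambda>M. {M}) ` special_family k n"
    using iso_special_family_iff[OF assms] by (intro image_cong) auto
  moreover have "card ((\<lambda>M. {M}) ` special_family k n) = card (special_family k n)"
    by (intro card_image) (simp add: inj_on_def)
  ultimately show ?thesis
    using card_special_family[OF assms] special_family_independent[OF assms] by auto
qed

end
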